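(* Let $(V,\nu)$ be a gauged space and $S\subseteq V$ a linear subspace. Then $S$ is a gauge ideal of $(V,\nu)$ if and only if there exist a gauged space $(W,\omega)$ and a gauge-bounded linear map $\phi:V\to W$ with $S=\ker\phi$. Moreover, when $S$ is a gauge ideal, $q(x+S)=\inf\{\nu(y):y\in x+S\}$ is a proper gauge on the algebraic quotient $V/S$, and the quotient map $\pi:(V,\nu)\to(V/S,q)$ is gauge-contractive with kernel $S$.
   Context: A gauge on a real vector space $V$ is a map $\nu:V\to[0,\infty)$ with $\nu(x+y)\le\nu(x)+\nu(y)$ and $\nu(tx)=t\nu(x)$ for all $x,y\in V$, $t>0$; it is proper if for every $x\neq0$, $\nu(x)\neq0$ or $\nu(-x)\neq0$; a gauged space is a pair $(V,\nu)$ with $\nu$ a proper gauge. A linear map $\phi:(V,\nu)\to(W,\omega)$ is gauge-bounded if there is $C>0$ with $\omega(\phi(x))\le C\nu(x)$ for all $x$, and gauge-contractive if $C=1$ works. A subspace $S$ is a gauge ideal if whenever $x\in V$ and there are sequences $(a_n),(b_n)\subseteq S$ with $\nu(x-a_n)\to0$ and $\nu(b_n-x)\to0$, then $x\in S$. *)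

theory Defs
  imports Complex_Main
begin

definition gauge :: "('a::real_vector \<Rightarrow> real) \<Rightarrow> bool" where
  "gauge \<nu> \<longleftrightarrow> (\<forall>x. 0 \<le> \<nu> x) \<and> (\<forall>x y. \<nu> (x + y) \<le> \<nu> x + \<nu> y)
      \<and> (\<forall>t x. t > 0 \<longrightarrow> \<nu> (t *\<^sub>R x) = t * \<nu> x)"

definition proper_gauge :: "('a::real_vector \<Rightarrow> real) \<Rightarrow> bool" where
  "proper_gauge \<nu> \<longleftrightarrow> gauge \<nu> \<and> (\<forall>x. x \<noteq> 0 \<longrightarrow> \<nu> x \<noteq> 0 \<or> \<nu> (- x) \<noteq> 0)"

text \<open>A gauged space (V, nu) is a real vector space type V with a proper gauge nu.\<close>

definition gauge_bounded ::
  "('a::real_vector \<Rightarrow> real) \<Rightarrow> ('b::real_vector \<Rightarrow> real) \<Rightarrow> ('a \<Rightarrow> 'b) \<Rightarrow> bool" where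
  "gauge_bounded \<nu> \<omega> \<phi> \<longleftrightarrow> (\<exists>C>0. \<forall>x. \<omega> (\<phi> x) \<le> C * \<nu> x)"

definition gauge_contractive ::
  "('a::real_vector \<Rightarrow> real) \<Rightarrow> ('b::real_vector \<Rightarrow> real) \<Rightarrow> ('a \<Rightarrow> 'b) \<Rightarrow> bool" where
  "gauge_contractive \<nu> \<omega> \<phi> \<longleftrightarrow> (\<forall>x. \<omega> (\<phi> x) \<le> \<nu> x)"

definition gauge_ideal :: "('a::real_vector \<Rightarrow> real) \<Rightarrow> 'a set \<Rightarrow> bool" where
  "gauge_ideal \<nu> S \<longleftrightarrow> (\<forall>x a b. (\<forall>n. a n \<in> S) \<and> (\<forall>n. b n \<in> S)
      \<and> (\<lambda>n. \<nu> (x - a n)) \<longlonglongrightarrow> 0 \<and> (\<lambda>n. \<nu> (b n - x)) \<longlonglongrightarrow> 0 \<longrightarrow> x \<in> S)"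

definition coset :: "'a::real_vector set \<Rightarrow> 'a \<Rightarrow> 'a set" where
  "coset S x = (\<lambda>s. x + s) ` S"

definition quotient_space :: "'a::real_vector set \<Rightarrow> 'a set set" where
  "quotient_space S = range (coset S)"

definition qadd :: "'a::real_vector set \<Rightarrow> 'a set \<Rightarrow> 'a set" where
  "qadd C D = {c + d | c d. c \<in> C \<and> d \<in> D}"

definition qscale :: "real \<Rightarrow> 'a::real_vector set \<Rightarrow> 'a set" where
  "qscale t C = (\<lambda>c. t *\<^sub>R c) ` C"

definition qneg :: "'a::real_vector set \<Rightarrow> 'a set" where
  "qneg C = uminus ` C"

definition quotient_gauge :: "('a::real_vector \<Rightarrow> real) \<Rightarrow> 'a set \<Rightarrow> real" where
  "quotient_gauge \<nu> C = Inf (\<nu> ` C)"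

end

theory Submission
  imports Defs
begin

text \<open>
  If \<open>\<phi>\<close> is gauge-bounded into a proper gauge, then \<open>x - a\<^sub>n \<rightarrow> 0\<close> and \<open>b\<^sub>n - x \<rightarrow> 0\<close> with
  \<open>a\<^sub>n, b\<^sub>n \<in> ker \<phi>\<close> force \<open>\<omega>(\<phi> x) = \<omega>(-\<phi> x) = 0\<close>, hence \<open>\<phi> x = 0\<close>: kernels are gauge ideals.
  Conversely, for a gauge ideal \<open>S\<close> the infimum \<open>q(x + S)\<close> of \<open>\<nu>\<close> over a coset is a gauge,
  and the gauge ideal property is exactly what makes it proper: \<open>q(x + S) = q(-x + S) = 0\<close>
  produces the two approximating sequences from \<open>S\<close>. Since \<open>V/S\<close> is not a type, the
  gauged space \<open>W\<close> is taken to be \<open>V\<close> itself: choosing a linear projection \<open>\<phi>\<close> with kernel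
  \<open>S\<close>, the gauge \<open>\<omega> y = q(y + S) + \<nu>(y - \<phi> y)\<close> is proper (the first summand on
  vectors outside \<open>S\<close>, the second on \<open>S\<close>) and \<open>\<omega>(\<phi> x) = q(x + S) \<le> \<nu> x\<close>.
\<close>

lemma subspace_kernel_of_linear_projection:
  fixes S :: "'a::real_vector set"
  assumes "subspace S"
  obtains \<phi> :: "'a \<Rightarrow> 'a" where "linear \<phi>" "{x. \<phi> x = 0} = S" "\<And>x. x - \<phi> x \<in> S"
proof -
  obtain B where B: "B \<subseteq> S" "independent B" "S \<subseteq> span B"
    by (rule maximal_independent_subset)
  have span_B: "span B = S"
    using span_subspace[OF B(1) B(3) assms] .
  define E where "E = extend_basis B"
  have E: "B \<subseteq> E" "independent E" "span E = UNIV"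
    unfolding E_def using B(2) by (simp_all add: extend_basis_superset independent_extend_basis)
  obtain \<phi> :: "'a \<Rightarrow> 'a" where \<phi>: "linear \<phi>" "\<And>b. b \<in> E \<Longrightarrow> \<phi> b = (if b \<in> B then 0 else b)"
    using linear_independent_extend[OF E(2), of "\<lambda>b. if b \<in> B then 0 else b"] by blast
  have residual: "x - \<phi> x \<in> S" for x
  proof -
    have "x \<in> span E" using E(3) by simp
    then show ?thesis
    proof (rule span_induct)
      show "subspace {x. x - \<phi> x \<in> S}"
        by (rule linear_subspace_linear_preimage[OF linear_compose_sub[OF linear_ident \<phi>(1)] assms])
      show "b - \<phi> b \<in> S" if "b \<in> E" for b
        using \<phi>(2)[OF that] B(1) subspace_0[OF assms] by auto
    qed
  qed
  have "\<phi> x = 0" if "x \<in> S" for x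
  proof (rule linear_eq_on[OF \<phi>(1) linear_zero])
    show "x \<in> span B"
      using span_B that by simp
    show "\<phi> b = 0" if "b \<in> B" for b
      using \<phi>(2) E(1) that by auto
  qed
  moreover have "x \<in> S" if "\<phi> x = 0" for x
    using residual[of x] that by simp
  ultimately show thesis
    using that \<phi>(1) residual by blast
qed

lemma gauge_nonneg: "gauge \<nu> \<Longrightarrow> 0 \<le> \<nu> x"
  by (simp add: gauge_def)

lemma gauge_triangle: "gauge \<nu> \<Longrightarrow> \<nu> (x + y) \<le> \<nu> x + \<nu> y"
  by (simp add: gauge_def)

lemma gauge_pos_homogeneous: "gauge \<nu> \<Longrightarrow> t > 0 \<Longrightarrow> \<nu> (t *\<^sub>R x) = t * \<nu> x"
  by (simp add: gauge_def)

lemma gauge_zero: "gauge \<nu> \<Longrightarrow> \<nu> 0 = 0"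
  using gauge_pos_homogeneous[of \<nu> 2 0] by simp

lemma gauge_add:
  assumes "gauge \<mu>" "gauge \<nu>"
  shows "gauge (\<lambda>x. \<mu> x + \<nu> x)"
proof -
  have "\<mu> (x + y) + \<nu> (x + y) \<le> (\<mu> x + \<nu> x) + (\<mu> y + \<nu> y)" for x y
    using add_mono[OF gauge_triangle[OF assms(1), of x y] gauge_triangle[OF assms(2), of x y]]
    by (simp add: algebra_simps)
  then show ?thesis
    using assms unfolding gauge_def by (simp add: distrib_left)
qed

lemma gauge_linear_comp: "gauge \<nu> \<Longrightarrow> linear f \<Longrightarrow> gauge (\<lambda>x. \<nu> (f x))"
  unfolding gauge_def by (simp add: linear_add linear_scale)

lemma proper_gauge_imp_gauge: "proper_gauge \<nu> \<Longrightarrow> gauge \<nu>"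
  by (simp add: proper_gauge_def)

lemma gauge_contractive_imp_bounded: "gauge_contractive \<nu> \<omega> \<phi> \<Longrightarrow> gauge_bounded \<nu> \<omega> \<phi>"
  unfolding gauge_contractive_def gauge_bounded_def by (metis mult_1 zero_less_one)

lemma gauge_bounded_image_eq_0:
  assumes "gauge \<omega>" "gauge_bounded \<nu> \<omega> \<phi>"
    and "(\<lambda>n. \<nu> (x n)) \<longlonglongrightarrow> 0" "\<And>n. \<phi> (x n) = y"
  shows "\<omega> y = 0"
proof -
  obtain C where C: "C > 0" "\<And>x. \<omega> (\<phi> x) \<le> C * \<nu> x"
    using assms(2) unfolding gauge_bounded_def by blast
  have "\<omega> y \<le> C * \<nu> (x n)" for n
    using C(2)[of "x n"] assms(4) by simp
  moreover have "(\<lambda>n. C * \<nu> (x n)) \<longlonglongrightarrow> 0"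
    using tendsto_mult_right_zero[OF assms(3)] .
  ultimately have "\<omega> y \<le> 0"
    by (intro LIMSEQ_le_const[of "\<lambda>n. C * \<nu> (x n)"]) auto
  then show ?thesis
    using gauge_nonneg[OF assms(1)] by (meson order_antisym)
qed

lemma gauge_idealD:
  "gauge_ideal \<nu> S \<Longrightarrow> (\<And>n. a n \<in> S) \<Longrightarrow> (\<And>n. b n \<in> S)
    \<Longrightarrow> (\<lambda>n. \<nu> (x - a n)) \<longlonglongrightarrow> 0 \<Longrightarrow> (\<lambda>n. \<nu> (b n - x)) \<longlonglongrightarrow> 0 \<Longrightarrow> x \<in> S"
  unfolding gauge_ideal_def by blast

lemma gauge_ideal_kernel:
  fixes \<omega> :: "'b::real_vector \<Rightarrow> real"
  assumes "proper_gauge \<omega>" "linear \<phi>" "gauge_bounded \<nu> \<omega> \<phi>" "S = {x. \<phi> x = 0}"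
  shows "gauge_ideal \<nu> S"
  unfolding gauge_ideal_def
proof (intro allI impI, elim conjE)
  fix x a b
  assume "\<forall>n. a n \<in> S" "\<forall>n. b n \<in> S"
    and a: "(\<lambda>n. \<nu> (x - a n)) \<longlonglongrightarrow> 0" and b: "(\<lambda>n. \<nu> (b n - x)) \<longlonglongrightarrow> 0"
  then have "\<phi> (a n) = 0" "\<phi> (b n) = 0" for n
    using assms(4) by auto
  then have "\<phi> (x - a n) = \<phi> x" "\<phi> (b n - x) = - \<phi> x" for n
    using linear_diff[OF assms(2)] by simp_all
  with a b have "\<omega> (\<phi> x) = 0" "\<omega> (- \<phi> x) = 0"
    by (auto intro: gauge_bounded_image_eq_0[OF proper_gauge_imp_gauge[OF assms(1)] assms(3)])
  then have "\<phi> x = 0"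
    using assms(1) unfolding proper_gauge_def by blast
  then show "x \<in> S"
    using assms(4) by simp
qed

lemma coset_eq_iff:
  assumes "subspace S"
  shows "coset S x = coset S y \<longleftrightarrow> x - y \<in> S"
proof
  assume "coset S x = coset S y"
  moreover have "x \<in> coset S x"
    unfolding coset_def using subspace_0[OF assms] by force
  ultimately obtain s where "s \<in> S" "x = y + s"
    unfolding coset_def by auto
  then show "x - y \<in> S" by simp
next
  assume "x - y \<in> S"
  then have "x + s \<in> coset S y" "y + s \<in> coset S x" if "s \<in> S" for s
    unfolding coset_def using that subspace_add[OF assms] subspace_diff[OF assms]
    by (force simp: image_iff intro: bexI[of _ "x - y + s"] bexI[of _ "s - (x - y)"])+
  then show "coset S x = coset S y"
    unfolding coset_def by blast
qed

lemma ball_quotient_space: "(\<forall>C\<in>quotient_space S. P C) \<longleftrightarrow> (\<forall>x. P (coset S x))"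
  by (simp add: quotient_space_def)

lemma qadd_coset:
  assumes "subspace S"
  shows "qadd (coset S x) (coset S y) = coset S (x + y)"
proof (rule set_eqI, rule iffI)
  fix z assume "z \<in> qadd (coset S x) (coset S y)"
  then obtain s s' where "s \<in> S" "s' \<in> S" "z = (x + y) + (s + s')"
    unfolding qadd_def coset_def by (auto simp: algebra_simps)
  then show "z \<in> coset S (x + y)"
    unfolding coset_def using subspace_add[OF assms] by blast
next
  fix z assume "z \<in> coset S (x + y)"
  then obtain s where "s \<in> S" "z = (x + s) + (y + 0)"
    unfolding coset_def by (auto simp: algebra_simps)
  then show "z \<in> qadd (coset S x) (coset S y)"
    unfolding qadd_def coset_def using subspace_0[OF assms] by blast
qed

lemma subspace_scaleR_image:
  assumes "subspace S" "t \<noteq> 0"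
  shows "(\<lambda>s. t *\<^sub>R s) ` S = S"
proof
  show "(\<lambda>s. t *\<^sub>R s) ` S \<subseteq> S"
    using subspace_scale[OF assms(1)] by auto
  have "s = t *\<^sub>R ((1/t) *\<^sub>R s)" "(1/t) *\<^sub>R s \<in> S" if "s \<in> S" for s
    using assms subspace_scale that by auto
  then show "S \<subseteq> (\<lambda>s. t *\<^sub>R s) ` S"
    by blast
qed

lemma qscale_coset:
  assumes "subspace S" "t \<noteq> 0"
  shows "qscale t (coset S x) = coset S (t *\<^sub>R x)"
proof -
  have "qscale t (coset S x) = (\<lambda>s. t *\<^sub>R x + s) ` ((\<lambda>s. t *\<^sub>R s) ` S)"
    unfolding qscale_def coset_def image_image by (simp add: scaleR_add_right)
  then show ?thesis
    unfolding subspace_scaleR_image[OF assms] coset_def .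
qed

lemma qneg_coset:
  assumes "subspace S"
  shows "qneg (coset S x) = coset S (- x)"
proof -
  have "qneg (coset S x) = qscale (-1) (coset S x)"
    unfolding qneg_def qscale_def by simp
  then show ?thesis
    using qscale_coset[OF assms, of "-1"] by simp
qed

definition coset_gauge :: "('a::real_vector \<Rightarrow> real) \<Rightarrow> 'a set \<Rightarrow> 'a \<Rightarrow> real" where
  "coset_gauge \<nu> S x = quotient_gauge \<nu> (coset S x)"

lemma coset_gauge_eq_Inf: "coset_gauge \<nu> S x = Inf ((\<lambda>s. \<nu> (x + s)) ` S)"
  unfolding coset_gauge_def quotient_gauge_def coset_def by (simp add: image_image)

lemma coset_gauge_cong: "subspace S \<Longrightarrow> x - y \<in> S \<Longrightarrow> coset_gauge \<nu> S x = coset_gauge \<nu> S y"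
  unfolding coset_gauge_def using coset_eq_iff[of S x y] by simp

context
  fixes \<nu> :: "'a::real_vector \<Rightarrow> real" and S :: "'a set"
  assumes gauge: "gauge \<nu>" and subspace: "subspace S"
begin

lemma coset_gauge_le: "s \<in> S \<Longrightarrow> coset_gauge \<nu> S x \<le> \<nu> (x + s)"
  unfolding coset_gauge_eq_Inf
  by (rule cInf_lower) (auto intro: bdd_belowI[of _ 0] gauge_nonneg[OF gauge])

lemma coset_gauge_greatest: "(\<And>s. s \<in> S \<Longrightarrow> c \<le> \<nu> (x + s)) \<Longrightarrow> c \<le> coset_gauge \<nu> S x"
  unfolding coset_gauge_eq_Inf using subspace_0[OF subspace] by (intro cInf_greatest) auto

lemma coset_gauge_le_gauge: "coset_gauge \<nu> S x \<le> \<nu> x"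
  using coset_gauge_le[of 0 x] subspace_0[OF subspace] by simp

lemma coset_gauge_nonneg: "0 \<le> coset_gauge \<nu> S x"
  by (rule coset_gauge_greatest) (rule gauge_nonneg[OF gauge])

lemma coset_gauge_triangle: "coset_gauge \<nu> S (x + y) \<le> coset_gauge \<nu> S x + coset_gauge \<nu> S y"
proof -
  have "coset_gauge \<nu> S (x + y) - \<nu> (y + s') \<le> coset_gauge \<nu> S x" if "s' \<in> S" for s'
  proof (rule coset_gauge_greatest)
    fix s assume "s \<in> S"
    have "coset_gauge \<nu> S (x + y) \<le> \<nu> ((x + y) + (s + s'))"
      using coset_gauge_le subspace_add[OF subspace \<open>s \<in> S\<close> that] .
    also have "(x + y) + (s + s') = (x + s) + (y + s')"
      by (simp add: algebra_simps)
    finally show "coset_gauge \<nu> S (x + y) - \<nu> (y + s') \<le> \<nu> (x + s)"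
      using gauge_triangle[OF gauge, of "x + s" "y + s'"] by simp
  qed
  then have "coset_gauge \<nu> S (x + y) - coset_gauge \<nu> S x \<le> coset_gauge \<nu> S y"
    by (intro coset_gauge_greatest) (simp add: algebra_simps)
  then show ?thesis by simp
qed

lemma coset_gauge_scale_le:
  assumes "t > 0"
  shows "coset_gauge \<nu> S (t *\<^sub>R x) \<le> t * coset_gauge \<nu> S x"
proof -
  have "coset_gauge \<nu> S (t *\<^sub>R x) / t \<le> \<nu> (x + s)" if "s \<in> S" for s
  proof -
    have "coset_gauge \<nu> S (t *\<^sub>R x) \<le> \<nu> (t *\<^sub>R (x + s))"
      using coset_gauge_le subspace_scale[OF subspace that] by (simp add: scaleR_add_right)
    then show ?thesis
      using assms by (simp add: gauge_pos_homogeneous[OF gauge] divide_le_eq mult.commute)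
  qed
  then have "coset_gauge \<nu> S (t *\<^sub>R x) / t \<le> coset_gauge \<nu> S x"
    by (rule coset_gauge_greatest)
  then show ?thesis
    using assms by (simp add: divide_le_eq mult.commute)
qed

lemma coset_gauge_pos_homogeneous:
  assumes "t > 0"
  shows "coset_gauge \<nu> S (t *\<^sub>R x) = t * coset_gauge \<nu> S x"
proof (rule antisym)
  show "coset_gauge \<nu> S (t *\<^sub>R x) \<le> t * coset_gauge \<nu> S x"
    using coset_gauge_scale_le[OF assms] .
  have "coset_gauge \<nu> S x \<le> (1/t) * coset_gauge \<nu> S (t *\<^sub>R x)"
    using coset_gauge_scale_le[of "1/t" "t *\<^sub>R x"] assms by simp
  then show "t * coset_gauge \<nu> S x \<le> coset_gauge \<nu> S (t *\<^sub>R x)"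
    using assms by (simp add: field_simps)
qed

lemma gauge_coset_gauge: "gauge (coset_gauge \<nu> S)"
  unfolding gauge_def
  using coset_gauge_nonneg coset_gauge_triangle coset_gauge_pos_homogeneous by blast

lemma coset_gauge_eq_0_imp_null_sequence:
  assumes "coset_gauge \<nu> S x = 0"
  obtains a where "\<And>n. a n \<in> S" "(\<lambda>n. \<nu> (x + a n)) \<longlonglongrightarrow> 0"
proof -
  have "\<exists>s\<in>S. \<nu> (x + s) < inverse (real (Suc n))" for n
  proof -
    have "Inf ((\<lambda>s. \<nu> (x + s)) ` S) < inverse (real (Suc n))"
      using assms unfolding coset_gauge_eq_Inf by simp
    from cInf_lessD[OF _ this] show ?thesis
      using subspace_0[OF subspace] by auto
  qed
  then obtain a where a: "\<And>n. a n \<in> S" "\<And>n. \<nu> (x + a n) < inverse (real (Suc n))"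
    by metis
  have "(\<lambda>n. \<nu> (x + a n)) \<longlonglongrightarrow> 0"
  proof (rule tendsto_sandwich[OF _ _ tendsto_const LIMSEQ_inverse_real_of_nat])
    show "\<forall>\<^sub>F n in sequentially. 0 \<le> \<nu> (x + a n)"
      using gauge_nonneg[OF gauge] by simp
    show "\<forall>\<^sub>F n in sequentially. \<nu> (x + a n) \<le> inverse (real (Suc n))"
      using a(2) by (simp add: less_imp_le)
  qed
  then show thesis
    using that a(1) by blast
qed

lemma coset_gauge_proper:
  assumes "gauge_ideal \<nu> S" "x \<notin> S"
  shows "coset_gauge \<nu> S x \<noteq> 0 \<or> coset_gauge \<nu> S (- x) \<noteq> 0"
proof (rule ccontr)
  assume "\<not> ?thesis"
  then obtain a b where "\<And>n. a n \<in> S" "(\<lambda>n. \<nu> (x + a n)) \<longlonglongrightarrow> 0"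
    and "\<And>n. b n \<in> S" "(\<lambda>n. \<nu> (- x + b n)) \<longlonglongrightarrow> 0"
    using coset_gauge_eq_0_imp_null_sequence by metis
  then have "x \<in> S"
    using gauge_idealD[OF assms(1), of "\<lambda>n. - a n" b x] subspace_neg[OF subspace]
    by (simp add: algebra_simps)
  with assms(2) show False ..
qed

end

lemma proper_gauge_coset_gauge_add:
  assumes "proper_gauge \<nu>" "subspace S" "gauge_ideal \<nu> S"
    and "gauge \<mu>" "\<And>z. z \<in> S \<Longrightarrow> \<nu> z \<le> \<mu> z"
  shows "proper_gauge (\<lambda>y. coset_gauge \<nu> S y + \<mu> y)"
proof -
  have gauge: "gauge \<nu>"
    using assms(1) by (rule proper_gauge_imp_gauge)
  note q_nonneg = coset_gauge_nonneg[OF gauge assms(2)] and \<mu>_nonneg = gauge_nonneg[OF assms(4)]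
  have "coset_gauge \<nu> S y + \<mu> y \<noteq> 0 \<or> coset_gauge \<nu> S (- y) + \<mu> (- y) \<noteq> 0"
    if "y \<noteq> 0" for y
  proof (cases "y \<in> S")
    case True
    then have "\<nu> y \<le> \<mu> y" "\<nu> (- y) \<le> \<mu> (- y)"
      using assms(5) subspace_neg[OF assms(2)] by blast+
    moreover have "\<nu> y \<noteq> 0 \<or> \<nu> (- y) \<noteq> 0"
      using assms(1) that unfolding proper_gauge_def by blast
    ultimately show ?thesis
      using gauge_nonneg[OF gauge, of y] gauge_nonneg[OF gauge, of "- y"]
        q_nonneg[of y] q_nonneg[of "- y"] by linarith
  next
    case False
    then have "coset_gauge \<nu> S y \<noteq> 0 \<or> coset_gauge \<nu> S (- y) \<noteq> 0"
      using coset_gauge_proper[OF gauge assms(2,3)] by blast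
    then show ?thesis
      using \<mu>_nonneg[of y] \<mu>_nonneg[of "- y"] q_nonneg[of y] q_nonneg[of "- y"] by linarith
  qed
  moreover have "gauge (\<lambda>y. coset_gauge \<nu> S y + \<mu> y)"
    using gauge_add[OF gauge_coset_gauge[OF gauge assms(2)] assms(4)] .
  ultimately show ?thesis
    unfolding proper_gauge_def by blast
qed

lemma gauge_ideal_imp_kernel_of_gauge_bounded:
  fixes \<nu> :: "'a::real_vector \<Rightarrow> real"
  assumes "proper_gauge \<nu>" "subspace S" "gauge_ideal \<nu> S"
  shows "\<exists>(\<omega>::'a \<Rightarrow> real) \<phi>. proper_gauge \<omega> \<and> linear \<phi> \<and> gauge_bounded \<nu> \<omega> \<phi>
           \<and> S = {x. \<phi> x = 0}"
proof -
  have gauge: "gauge \<nu>"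
    using assms(1) by (rule proper_gauge_imp_gauge)
  obtain \<phi> :: "'a \<Rightarrow> 'a" where \<phi>: "linear \<phi>" "{x. \<phi> x = 0} = S" "\<And>x. x - \<phi> x \<in> S"
    using subspace_kernel_of_linear_projection[OF assms(2)] by blast
  define \<omega> where "\<omega> y = coset_gauge \<nu> S y + \<nu> (y - \<phi> y)" for y
  have "proper_gauge \<omega>"
    unfolding \<omega>_def
  proof (rule proper_gauge_coset_gauge_add[OF assms])
    show "gauge (\<lambda>y. \<nu> (y - \<phi> y))"
      using gauge_linear_comp[OF gauge linear_compose_sub[OF linear_ident \<phi>(1)]] .
    show "\<nu> z \<le> \<nu> (z - \<phi> z)" if "z \<in> S" for z
      using that \<phi>(2) by auto
  qed
  moreover have "gauge_contractive \<nu> \<omega> \<phi>"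
    unfolding gauge_contractive_def
  proof
    fix x
    have "\<phi> (\<phi> x) = \<phi> x"
      using \<phi>(2,3) linear_diff[OF \<phi>(1)] by fastforce
    then have "\<omega> (\<phi> x) = coset_gauge \<nu> S x"
      unfolding \<omega>_def using gauge_zero[OF gauge] coset_gauge_cong[OF assms(2) \<phi>(3)] by simp
    then show "\<omega> (\<phi> x) \<le> \<nu> x"
      using coset_gauge_le_gauge[OF gauge assms(2)] by simp
  qed
  ultimately show ?thesis
    using \<phi>(1,2) gauge_contractive_imp_bounded by blast
qed

theorem proposition2p25:
  fixes \<nu> :: "'a::real_vector \<Rightarrow> real" and S :: "'a set"
  assumes "proper_gauge \<nu>" and "subspace S"
  shows "(gauge_ideal \<nu> S \<longleftrightarrow>
           (\<exists>(\<omega>::'a \<Rightarrow> real) \<phi>. proper_gauge \<omega> \<and> linear \<phi> \<and> gauge_bounded \<nu> \<omega> \<phi>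
                \<and> S = {x. \<phi> x = 0}))
    \<and> (\<forall>(\<omega>::'b::real_vector \<Rightarrow> real) (\<phi>::'a \<Rightarrow> 'b).
           proper_gauge \<omega> \<and> linear \<phi> \<and> gauge_bounded \<nu> \<omega> \<phi> \<and> S = {x. \<phi> x = 0}
           \<longrightarrow> gauge_ideal \<nu> S)
    \<and> (gauge_ideal \<nu> S \<longrightarrow>
           (\<forall>C\<in>quotient_space S. 0 \<le> quotient_gauge \<nu> C)
         \<and> (\<forall>C\<in>quotient_space S. \<forall>D\<in>quotient_space S.
              quotient_gauge \<nu> (qadd C D) \<le> quotient_gauge \<nu> C + quotient_gauge \<nu> D)
         \<and> (\<forall>C\<in>quotient_space S. \<forall>t>0. quotient_gauge \<nu> (qscale t C) = t * quotient_gauge \<nu> C)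
         \<and> (\<forall>C\<in>quotient_space S. C \<noteq> coset S 0 \<longrightarrow>
              quotient_gauge \<nu> C \<noteq> 0 \<or> quotient_gauge \<nu> (qneg C) \<noteq> 0)
         \<and> (\<forall>x. quotient_gauge \<nu> (coset S x) \<le> \<nu> x)
         \<and> {x. coset S x = coset S 0} = S)"
proof -
  have gauge: "gauge \<nu>"
    using assms(1) by (rule proper_gauge_imp_gauge)
  have coset_eq_0: "coset S x = coset S 0 \<longleftrightarrow> x \<in> S" for x
    using coset_eq_iff[OF assms(2)] by simp
  show ?thesis
    unfolding ball_quotient_space
    by (intro conjI impI allI iffI)
      (use gauge_ideal_imp_kernel_of_gauge_bounded[OF assms]
        coset_gauge_nonneg[OF gauge assms(2)] coset_gauge_triangle[OF gauge assms(2)]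
        coset_gauge_pos_homogeneous[OF gauge assms(2)] coset_gauge_proper[OF gauge assms(2)]
        coset_gauge_le_gauge[OF gauge assms(2)] in
        \<open>auto simp: coset_gauge_def[symmetric] coset_eq_0 qadd_coset qscale_coset qneg_coset assms(2)
          intro: gauge_ideal_kernel\<close>)
qed

end
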